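(* Let $g\in\mathcal{P}(\mathbb{R})$, $\beta,\sigma>0$ and $\gamma:=\beta+\sigma^2/2$. There is a constant $C(\beta,\sigma)$ such that for all $z\in\mathbb{C}$ with $\Re(z)\in[0,\beta]$, $$|P(z)|+|P'(z)|\le\Big(1+\int_{\mathbb{R}}\omega^2g(\mathrm{d}\omega)\Big)\frac{C(\beta,\sigma)}{|\Im(z)|^2}.$$
   Context: For $z\in\mathbb{C}$ with $\Re(z)\in(-\sigma^2/2,\gamma)$, $P(z):=\int_{\mathbb{R}}\frac{g(\mathrm{d}\omega)}{(\gamma+i\omega-z)(\frac{\sigma^2}{2}+z-i\omega)}$ (a holomorphic function on this strip), and $P'$ denotes its complex derivative. *)

theory Defs
  imports "HOL-Probability.Probability"
begin

definition gam :: "real \<Rightarrow> real \<Rightarrow> real" where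
  "gam \<beta> \<sigma> = \<beta> + \<sigma>\<^sup>2 / 2"

definition Pfun :: "real measure \<Rightarrow> real \<Rightarrow> real \<Rightarrow> complex \<Rightarrow> complex" where
  "Pfun g \<beta> \<sigma> z = (LINT \<omega>|g.
     1 / ((complex_of_real (gam \<beta> \<sigma>) + \<i> * complex_of_real \<omega> - z) *
          (complex_of_real (\<sigma>\<^sup>2 / 2) + z - \<i> * complex_of_real \<omega>)))"

end

theory Submission
  imports Defs
begin

text \<open>Write \<open>u = \<gamma> + i\<omega> - z\<close> and \<open>v = \<sigma>\<^sup>2/2 + z - i\<omega>\<close>. Since \<open>u + v = \<beta> + \<sigma>\<^sup>2\<close> is
  constant, the integrand \<open>1/(uv)\<close> splits into partial fractions \<open>(1/u + 1/v) / (\<beta> + \<sigma>\<^sup>2)\<close>,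
  and the second-order Taylor remainders of \<open>1/u\<close> and \<open>1/v\<close> are uniformly \<open>O(|w - z|\<^sup>2)\<close>
  on closed substrips, which justifies differentiating under the integral sign.
  For \<open>0 \<le> Re z \<le> \<beta>\<close> both \<open>Re u\<close> and \<open>Re v\<close> are at least \<open>a = \<sigma>\<^sup>2/2\<close>, and
  \<open>|Im u| = |Im v| = |\<omega> - y|\<close> with \<open>y = Im z\<close>, so both integrands are \<open>O(1 / (a\<^sup>2 + (\<omega> - y)\<^sup>2))\<close>.
  Since \<open>y\<^sup>2 \<le> 2\<omega>\<^sup>2 + 2(\<omega> - y)\<^sup>2\<close>, this is \<open>O((1 + \<omega>\<^sup>2) / y\<^sup>2)\<close>, and integrating
  against \<open>g\<close> gives the bound.\<close>

lemma norm_inverse_remainder_le: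
  fixes u v :: "'a::real_normed_field"
  assumes "0 < c" "c \<le> norm u" "c \<le> norm v"
  shows "norm (1 / u - 1 / v - (v - u) / v\<^sup>2) \<le> (norm (v - u))\<^sup>2 / c ^ 3"
proof -
  have "u \<noteq> 0" "v \<noteq> 0" using assms by auto
  then have "1 / u - 1 / v - (v - u) / v\<^sup>2 = (v - u)\<^sup>2 / (u * v\<^sup>2)"
    by (simp add: field_simps power2_eq_square)
  also have "norm \<dots> = (norm (v - u))\<^sup>2 / (norm u * (norm v)\<^sup>2)"
    by (simp add: norm_divide norm_mult norm_power)
  also have "\<dots> \<le> (norm (v - u))\<^sup>2 / c ^ 3"
  proof (rule divide_left_mono)
    show "c ^ 3 \<le> norm u * (norm v)\<^sup>2"
      unfolding power3_eq_cube power2_eq_square mult.assoc using assms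
      by (intro mult_mono) auto
  qed (use assms \<open>u \<noteq> 0\<close> \<open>v \<noteq> 0\<close> in auto)
  finally show ?thesis .
qed

lemma norm_inverse_mult_le:
  fixes u v :: "'a::real_normed_field"
  assumes "0 < m" "m \<le> (norm u)\<^sup>2" "m \<le> (norm v)\<^sup>2"
  shows "norm (1 / (u * v)) \<le> 1 / m"
proof -
  have "m\<^sup>2 \<le> (norm u * norm v)\<^sup>2"
    unfolding power_mult_distrib power2_eq_square[of m] using assms by (intro mult_mono) auto
  then have "m \<le> norm u * norm v"
    by (rule power2_le_imp_le) simp
  then show ?thesis
    using assms(1) by (simp add: norm_divide norm_mult frac_le)
qed

lemma inverse_shifted_square_le:
  fixes a y \<omega> :: real
  assumes "0 < a" and "y \<noteq> 0"
  shows "1 / (a\<^sup>2 + (\<omega> - y)\<^sup>2) \<le> 2 * (1 + 1 / a\<^sup>2) * (1 + \<omega>\<^sup>2) / y\<^sup>2"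
proof -
  define m where "m = a\<^sup>2 + (\<omega> - y)\<^sup>2"
  have "0 < m" using assms by (simp add: m_def add_pos_nonneg)
  have "y\<^sup>2 \<le> 2 * \<omega>\<^sup>2 + 2 * (\<omega> - y)\<^sup>2"
    using zero_le_power2[of "2 * \<omega> - y"] by (simp add: power2_eq_square algebra_simps)
  also have "2 * \<omega>\<^sup>2 \<le> 2 / a\<^sup>2 * ((1 + \<omega>\<^sup>2) * m)"
  proof -
    have "\<omega>\<^sup>2 * a\<^sup>2 \<le> (1 + \<omega>\<^sup>2) * m"
      by (intro mult_mono) (auto simp: m_def)
    then show ?thesis using assms by (simp add: field_simps)
  qed
  also have "2 * (\<omega> - y)\<^sup>2 \<le> 2 * ((1 + \<omega>\<^sup>2) * m)"
  proof -
    have "(\<omega> - y)\<^sup>2 \<le> m" by (simp add: m_def)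
    also have "m \<le> (1 + \<omega>\<^sup>2) * m" using \<open>0 < m\<close> by simp
    finally show ?thesis by simp
  qed
  finally have "y\<^sup>2 \<le> 2 * (1 + 1 / a\<^sup>2) * (1 + \<omega>\<^sup>2) * m"
    by (simp add: algebra_simps)
  then show ?thesis
    using \<open>0 < m\<close> assms by (simp add: m_def[symmetric] field_simps)
qed

lemma integrable_bounded_borel:
  fixes f :: "real \<Rightarrow> 'b::{banach,second_countable_topology}"
  assumes "finite_measure M" and "sets M = sets borel"
    and "f \<in> borel_measurable borel" and "\<And>x. norm (f x) \<le> B"
  shows "integrable M f"
proof -
  interpret finite_measure M by fact
  show ?thesis
    using assms(3,4) measurable_cong_sets[OF assms(2) refl]
    by (intro integrable_const_bound[where B = B]) auto
qed

lemma has_field_derivative_integral_quadratic_remainder: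
  fixes f :: "'a \<Rightarrow> 'b \<Rightarrow> 'b::{real_normed_field,banach,second_countable_topology}"
  assumes "finite_measure M" and "0 < r"
    and f: "\<And>w. dist w z < r \<Longrightarrow> integrable M (\<lambda>x. f x w)"
    and f': "integrable M f'"
    and remainder: "\<And>w x. dist w z < r \<Longrightarrow> x \<in> space M \<Longrightarrow>
                       norm (f x w - f x z - (w - z) * f' x) \<le> B * (norm (w - z))\<^sup>2"
  shows "((\<lambda>w. \<integral>x. f x w \<partial>M) has_field_derivative (\<integral>x. f' x \<partial>M)) (at z)"
proof -
  interpret finite_measure M by fact
  define F where "F w = (\<integral>x. f x w \<partial>M)" for w
  define V where "V = measure M (space M)"
  have remainder_integral:
    "norm (F w - F z - (w - z) * (\<integral>x. f' x \<partial>M)) \<le> B * (norm (w - z))\<^sup>2 * V"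
    if "dist w z < r" for w
  proof -
    have "F w - F z - (w - z) * (\<integral>x. f' x \<partial>M) = (\<integral>x. f x w - f x z - (w - z) * f' x \<partial>M)"
      using f[OF that] f[of z] f' \<open>0 < r\<close> by (simp add: F_def)
    also have "norm \<dots> \<le> (\<integral>x. norm (f x w - f x z - (w - z) * f' x) \<partial>M)"
      by (rule integral_norm_bound)
    also have "\<dots> \<le> (\<integral>x. B * (norm (w - z))\<^sup>2 \<partial>M)"
      using f[OF that] f[of z] f' \<open>0 < r\<close> remainder[OF that]
      by (intro integral_mono) auto
    also have "\<dots> = B * (norm (w - z))\<^sup>2 * V"
      by (simp add: V_def)
    finally show ?thesis .
  qed
  have "\<forall>\<^sub>F w in at z. norm ((F w - F z) / (w - z) - (\<integral>x. f' x \<partial>M)) \<le> B * V * norm (w - z)"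
    unfolding eventually_at
  proof (intro exI[of _ r] conjI ballI impI)
    fix w assume w: "w \<noteq> z \<and> dist w z < r"
    then have "(F w - F z) / (w - z) - (\<integral>x. f' x \<partial>M) = (F w - F z - (w - z) * (\<integral>x. f' x \<partial>M)) / (w - z)"
      by (simp add: field_simps)
    also have "norm \<dots> \<le> B * (norm (w - z))\<^sup>2 * V / norm (w - z)"
      unfolding norm_divide using w remainder_integral by (intro divide_right_mono) auto
    also have "\<dots> = B * V * norm (w - z)"
      using w by (simp add: power2_eq_square)
    finally show "norm ((F w - F z) / (w - z) - (\<integral>x. f' x \<partial>M)) \<le> B * V * norm (w - z)" .
  qed (use \<open>0 < r\<close> in simp)
  moreover have "((\<lambda>w. B * V * norm (w - z)) \<longlongrightarrow> 0) (at z)"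
    by (intro tendsto_mult_right_zero tendsto_norm_zero LIM_zero tendsto_ident_at)
  ultimately have "((\<lambda>w. (F w - F z) / (w - z) - (\<integral>x. f' x \<partial>M)) \<longlongrightarrow> 0) (at z)"
    by (rule Lim_null_comparison)
  then show ?thesis
    unfolding has_field_derivative_iff F_def by (simp add: LIM_zero_iff)
qed

lemma ennreal_norm_integral_add_le:
  fixes f h :: "'a \<Rightarrow> 'b::{banach,second_countable_topology}"
  assumes "integrable M f" and "integrable M h"
  shows "ennreal (norm (\<integral>x. f x \<partial>M) + norm (\<integral>x. h x \<partial>M)) \<le> (\<integral>\<^sup>+ x. ennreal (norm (f x) + norm (h x)) \<partial>M)"
  using assms
  by (simp add: ennreal_plus nn_integral_add add_mono integral_norm_bound_ennreal)

lemma nn_integral_le_second_moment: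
  fixes M :: "real measure"
  assumes "prob_space M" and "sets M = sets borel" and "0 \<le> B"
    and "\<And>x. G x \<le> B * (1 + x\<^sup>2)"
  shows "(\<integral>\<^sup>+ x. ennreal (G x) \<partial>M) \<le> (1 + (\<integral>\<^sup>+ x. ennreal (x\<^sup>2) \<partial>M)) * ennreal B"
proof -
  interpret prob_space M by fact
  have [measurable_cong]: "sets M = sets borel" by fact
  have "ennreal (G x) \<le> ennreal B * (1 + ennreal (x\<^sup>2))" for x
  proof -
    have "ennreal (G x) \<le> ennreal (B * (1 + x\<^sup>2))" by (rule ennreal_leI) (rule assms(4))
    also have "\<dots> = ennreal B * (1 + ennreal (x\<^sup>2))" using \<open>0 \<le> B\<close> by (simp add: ennreal_mult ennreal_plus)
    finally show ?thesis .
  qed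
  then have "(\<integral>\<^sup>+ x. ennreal (G x) \<partial>M) \<le> (\<integral>\<^sup>+ x. ennreal B * (1 + ennreal (x\<^sup>2)) \<partial>M)"
    by (intro nn_integral_mono)
  also have "\<dots> = ennreal B * ((\<integral>\<^sup>+ x. 1 \<partial>M) + (\<integral>\<^sup>+ x. ennreal (x\<^sup>2) \<partial>M))"
    by (simp add: nn_integral_cmult nn_integral_add)
  finally show ?thesis by (simp add: emeasure_space_1 mult.commute)
qed

definition P_kernel :: "real \<Rightarrow> real \<Rightarrow> complex \<Rightarrow> real \<Rightarrow> complex" where
  "P_kernel \<beta> \<sigma> z \<omega> =
     1 / ((complex_of_real (gam \<beta> \<sigma>) + \<i> * complex_of_real \<omega> - z) *
          (complex_of_real (\<sigma>\<^sup>2 / 2) + z - \<i> * complex_of_real \<omega>))"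

definition P_kernel_deriv :: "real \<Rightarrow> real \<Rightarrow> complex \<Rightarrow> real \<Rightarrow> complex" where
  "P_kernel_deriv \<beta> \<sigma> z \<omega> =
     (1 / (complex_of_real (gam \<beta> \<sigma>) + \<i> * complex_of_real \<omega> - z)\<^sup>2 -
      1 / (complex_of_real (\<sigma>\<^sup>2 / 2) + z - \<i> * complex_of_real \<omega>)\<^sup>2) / (\<beta> + \<sigma>\<^sup>2)"

lemma Pfun_eq_integral_P_kernel: "Pfun g \<beta> \<sigma> z = (LINT \<omega>|g. P_kernel \<beta> \<sigma> z \<omega>)"
  by (simp add: Pfun_def P_kernel_def)

lemma P_kernel_partial_fractions:
  assumes "- (\<sigma>\<^sup>2 / 2) < Re z" and "Re z < gam \<beta> \<sigma>"
  shows "P_kernel \<beta> \<sigma> z \<omega> =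
           (1 / (complex_of_real (gam \<beta> \<sigma>) + \<i> * complex_of_real \<omega> - z) +
            1 / (complex_of_real (\<sigma>\<^sup>2 / 2) + z - \<i> * complex_of_real \<omega>)) / (\<beta> + \<sigma>\<^sup>2)"
proof -
  define u where "u = complex_of_real (gam \<beta> \<sigma>) + \<i> * complex_of_real \<omega> - z"
  define v where "v = complex_of_real (\<sigma>\<^sup>2 / 2) + z - \<i> * complex_of_real \<omega>"
  define K where "K = complex_of_real (\<beta> + \<sigma>\<^sup>2)"
  have "u \<noteq> 0" "v \<noteq> 0" using assms by (auto simp: u_def v_def complex_eq_iff)
  moreover have "u + v = K" by (simp add: u_def v_def K_def gam_def)
  moreover have "K \<noteq> 0" using assms unfolding K_def of_real_eq_0_iff by (simp add: gam_def)
  ultimately have "1 / (u * v) = (1 / u + 1 / v) / K" by (simp add: field_simps)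
  then show ?thesis unfolding P_kernel_def u_def v_def K_def .
qed

lemma P_kernel_factors_norm_ge:
  assumes "c - \<sigma>\<^sup>2 / 2 \<le> Re z" and "Re z \<le> gam \<beta> \<sigma> - c"
  shows "c \<le> cmod (complex_of_real (gam \<beta> \<sigma>) + \<i> * complex_of_real \<omega> - z)"
    and "c \<le> cmod (complex_of_real (\<sigma>\<^sup>2 / 2) + z - \<i> * complex_of_real \<omega>)"
  using assms complex_Re_le_cmod[of "complex_of_real (gam \<beta> \<sigma>) + \<i> * complex_of_real \<omega> - z"]
    complex_Re_le_cmod[of "complex_of_real (\<sigma>\<^sup>2 / 2) + z - \<i> * complex_of_real \<omega>"]
  by auto

lemma integrable_P_kernel:
  fixes g :: "real measure"
  assumes "finite_measure g" and "sets g = sets borel"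
    and "0 < c" and "c - \<sigma>\<^sup>2 / 2 \<le> Re z" and "Re z \<le> gam \<beta> \<sigma> - c"
  shows "integrable g (P_kernel \<beta> \<sigma> z)" and "integrable g (P_kernel_deriv \<beta> \<sigma> z)"
proof -
  have "0 < \<beta> + \<sigma>\<^sup>2" using assms(3-5) by (simp add: gam_def)
  note norms = P_kernel_factors_norm_ge[OF assms(4,5)]
  have c2: "c\<^sup>2 \<le> (cmod (complex_of_real (gam \<beta> \<sigma>) + \<i> * complex_of_real \<omega> - z))\<^sup>2"
      "c\<^sup>2 \<le> (cmod (complex_of_real (\<sigma>\<^sup>2 / 2) + z - \<i> * complex_of_real \<omega>))\<^sup>2" for \<omega>
    using norms[of \<omega>] \<open>0 < c\<close> by (auto intro: power_mono)
  have "cmod (P_kernel \<beta> \<sigma> z \<omega>) \<le> 1 / c\<^sup>2" for \<omega>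
    unfolding P_kernel_def using \<open>0 < c\<close> c2 by (intro norm_inverse_mult_le) auto
  moreover have "(\<lambda>\<omega>. P_kernel \<beta> \<sigma> z \<omega>) \<in> borel_measurable borel"
    unfolding P_kernel_def by measurable
  ultimately show "integrable g (P_kernel \<beta> \<sigma> z)"
    by (intro integrable_bounded_borel[OF assms(1,2)])
  have "cmod (P_kernel_deriv \<beta> \<sigma> z \<omega>) \<le> (1 / c\<^sup>2 + 1 / c\<^sup>2) / (\<beta> + \<sigma>\<^sup>2)" for \<omega>
    unfolding P_kernel_deriv_def norm_divide norm_of_real abs_of_pos[OF \<open>0 < \<beta> + \<sigma>\<^sup>2\<close>]
    using \<open>0 < c\<close> \<open>0 < \<beta> + \<sigma>\<^sup>2\<close> c2[of \<omega>]
    by (intro divide_right_mono order_trans[OF norm_triangle_ineq4 add_mono])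
       (auto simp: power2_eq_square intro!: norm_inverse_mult_le[unfolded power2_eq_square])
  moreover have "(\<lambda>\<omega>. P_kernel_deriv \<beta> \<sigma> z \<omega>) \<in> borel_measurable borel"
    unfolding P_kernel_deriv_def by measurable
  ultimately show "integrable g (P_kernel_deriv \<beta> \<sigma> z)"
    by (intro integrable_bounded_borel[OF assms(1,2)])
qed

lemma P_kernel_remainder_le:
  assumes "0 < c"
    and w: "c - \<sigma>\<^sup>2 / 2 \<le> Re w" "Re w \<le> gam \<beta> \<sigma> - c"
    and z: "c - \<sigma>\<^sup>2 / 2 \<le> Re z" "Re z \<le> gam \<beta> \<sigma> - c"
  shows "cmod (P_kernel \<beta> \<sigma> w \<omega> - P_kernel \<beta> \<sigma> z \<omega> - (w - z) * P_kernel_deriv \<beta> \<sigma> z \<omega>)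
           \<le> 2 / (c ^ 3 * (\<beta> + \<sigma>\<^sup>2)) * (cmod (w - z))\<^sup>2"
proof -
  define u where "u \<zeta> = complex_of_real (gam \<beta> \<sigma>) + \<i> * complex_of_real \<omega> - \<zeta>" for \<zeta>
  define v where "v \<zeta> = complex_of_real (\<sigma>\<^sup>2 / 2) + \<zeta> - \<i> * complex_of_real \<omega>" for \<zeta>
  define K where "K = \<beta> + \<sigma>\<^sup>2"
  have "0 < K" using \<open>0 < c\<close> z by (simp add: K_def gam_def)
  note norm_u = P_kernel_factors_norm_ge(1)[of c \<sigma> _ \<beta> \<omega>, folded u_def]
  note norm_v = P_kernel_factors_norm_ge(2)[of c \<sigma> _ \<beta> \<omega>, folded v_def]
  have "P_kernel \<beta> \<sigma> w \<omega> - P_kernel \<beta> \<sigma> z \<omega> - (w - z) * P_kernel_deriv \<beta> \<sigma> z \<omega> =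
          ((1 / u w - 1 / u z - (u z - u w) / (u z)\<^sup>2) +
           (1 / v w - 1 / v z - (v z - v w) / (v z)\<^sup>2)) / K"
    using \<open>0 < c\<close> w z
    by (simp add: P_kernel_partial_fractions P_kernel_deriv_def u_def v_def K_def
        diff_divide_distrib add_divide_distrib algebra_simps)
  also have "cmod \<dots> \<le> ((cmod (w - z))\<^sup>2 / c ^ 3 + (cmod (w - z))\<^sup>2 / c ^ 3) / K"
  proof -
    have "u z - u w = w - z" "v z - v w = - (w - z)" by (simp_all add: u_def v_def)
    then have "cmod (1 / u w - 1 / u z - (u z - u w) / (u z)\<^sup>2) \<le> (cmod (w - z))\<^sup>2 / c ^ 3"
      and "cmod (1 / v w - 1 / v z - (v z - v w) / (v z)\<^sup>2) \<le> (cmod (w - z))\<^sup>2 / c ^ 3"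
      using norm_inverse_remainder_le[OF \<open>0 < c\<close> norm_u[OF w] norm_u[OF z]]
        norm_inverse_remainder_le[OF \<open>0 < c\<close> norm_v[OF w] norm_v[OF z]]
      by (simp_all only: norm_minus_cancel)
    then show ?thesis
      unfolding norm_divide norm_of_real abs_of_pos[OF \<open>0 < K\<close>] using \<open>0 < K\<close>
      by (intro divide_right_mono order_trans[OF norm_triangle_ineq add_mono]) auto
  qed
  also have "\<dots> = 2 / (c ^ 3 * K) * (cmod (w - z))\<^sup>2"
    by simp
  finally show ?thesis unfolding K_def .
qed

lemma Pfun_has_field_derivative:
  fixes g :: "real measure"
  assumes "finite_measure g" and "sets g = sets borel"
    and "- (\<sigma>\<^sup>2 / 2) < Re z" and "Re z < gam \<beta> \<sigma>"
  shows "(Pfun g \<beta> \<sigma> has_field_derivative (LINT \<omega>|g. P_kernel_deriv \<beta> \<sigma> z \<omega>)) (at z)"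
proof -
  define c where "c = min (Re z + \<sigma>\<^sup>2 / 2) (gam \<beta> \<sigma> - Re z) / 2"
  have "0 < c" using assms(3,4) by (simp add: c_def)
  have "2 * c \<le> Re z + \<sigma>\<^sup>2 / 2" "2 * c \<le> gam \<beta> \<sigma> - Re z"
    by (simp_all add: c_def)
  then have near: "c - \<sigma>\<^sup>2 / 2 \<le> Re w \<and> Re w \<le> gam \<beta> \<sigma> - c" if "dist w z < c" for w
    using that abs_Re_le_cmod[of "w - z"] by (auto simp: dist_norm)
  have z: "c - \<sigma>\<^sup>2 / 2 \<le> Re z" "Re z \<le> gam \<beta> \<sigma> - c"
    using near[of z] \<open>0 < c\<close> by auto
  show ?thesis
    unfolding Pfun_eq_integral_P_kernel[abs_def]
  proof (rule has_field_derivative_integral_quadratic_remainder[OF assms(1) \<open>0 < c\<close>])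
    show "integrable g (\<lambda>\<omega>. P_kernel \<beta> \<sigma> w \<omega>)" if "dist w z < c" for w
      using integrable_P_kernel(1)[OF assms(1,2) \<open>0 < c\<close>] near[of w] that by simp
    show "integrable g (P_kernel_deriv \<beta> \<sigma> z)"
      by (rule integrable_P_kernel(2)[OF assms(1,2) \<open>0 < c\<close> z])
    show "cmod (P_kernel \<beta> \<sigma> w \<omega> - P_kernel \<beta> \<sigma> z \<omega> - (w - z) * P_kernel_deriv \<beta> \<sigma> z \<omega>)
            \<le> 2 / (c ^ 3 * (\<beta> + \<sigma>\<^sup>2)) * (cmod (w - z))\<^sup>2" if "dist w z < c" for w \<omega>
      using P_kernel_remainder_le[OF \<open>0 < c\<close> _ _ z] near[of w] that by simp
  qed
qed

lemma norm_P_kernel_add_deriv_le: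
  assumes "\<sigma> \<noteq> 0" and "0 \<le> Re z" and "Re z \<le> \<beta>"
  shows "cmod (P_kernel \<beta> \<sigma> z \<omega>) + cmod (P_kernel_deriv \<beta> \<sigma> z \<omega>)
           \<le> (1 + 2 / (\<beta> + \<sigma>\<^sup>2)) / ((\<sigma>\<^sup>2 / 2)\<^sup>2 + (\<omega> - Im z)\<^sup>2)"
proof -
  define u where "u = complex_of_real (gam \<beta> \<sigma>) + \<i> * complex_of_real \<omega> - z"
  define v where "v = complex_of_real (\<sigma>\<^sup>2 / 2) + z - \<i> * complex_of_real \<omega>"
  define m where "m = (\<sigma>\<^sup>2 / 2)\<^sup>2 + (\<omega> - Im z)\<^sup>2"
  define K where "K = \<beta> + \<sigma>\<^sup>2"
  have "0 < m" using assms by (simp add: m_def add_pos_nonneg)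
  have "0 < K" using assms by (simp add: K_def add_nonneg_pos)
  have "(\<sigma>\<^sup>2 / 2)\<^sup>2 \<le> (Re u)\<^sup>2" "(\<sigma>\<^sup>2 / 2)\<^sup>2 \<le> (Re v)\<^sup>2"
    using assms by (auto simp: u_def v_def gam_def intro!: power_mono)
  moreover have "(Im u)\<^sup>2 = (\<omega> - Im z)\<^sup>2" "(Im v)\<^sup>2 = (\<omega> - Im z)\<^sup>2"
    by (simp_all add: u_def v_def power2_commute)
  ultimately have u: "m \<le> (cmod u)\<^sup>2" and v: "m \<le> (cmod v)\<^sup>2"
    by (simp_all add: cmod_power2 m_def)
  have "cmod (P_kernel \<beta> \<sigma> z \<omega>) \<le> 1 / m"
    unfolding P_kernel_def u_def[symmetric] v_def[symmetric] by (rule norm_inverse_mult_le[OF \<open>0 < m\<close> u v])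
  moreover have "cmod (P_kernel_deriv \<beta> \<sigma> z \<omega>) \<le> (1 / m + 1 / m) / K"
    unfolding P_kernel_deriv_def u_def[symmetric] v_def[symmetric] K_def[symmetric]
      norm_divide norm_of_real abs_of_pos[OF \<open>0 < K\<close>] power2_eq_square[of u] power2_eq_square[of v]
    using \<open>0 < K\<close> norm_inverse_mult_le[OF \<open>0 < m\<close> u u] norm_inverse_mult_le[OF \<open>0 < m\<close> v v]
    by (intro divide_right_mono order_trans[OF norm_triangle_ineq4 add_mono]) auto
  ultimately show ?thesis
    by (simp add: m_def[symmetric] K_def[symmetric] add_divide_distrib mult.commute)
qed

lemma norm_P_kernel_add_deriv_le_weighted:
  assumes "\<sigma> \<noteq> 0" and "0 \<le> Re z" and "Re z \<le> \<beta>" and "Im z \<noteq> 0"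
  shows "cmod (P_kernel \<beta> \<sigma> z \<omega>) + cmod (P_kernel_deriv \<beta> \<sigma> z \<omega>)
           \<le> (1 + 2 / (\<beta> + \<sigma>\<^sup>2)) * (2 * (1 + 1 / (\<sigma>\<^sup>2 / 2)\<^sup>2)) / (Im z)\<^sup>2 * (1 + \<omega>\<^sup>2)"
proof -
  have "0 < \<beta> + \<sigma>\<^sup>2" using assms by (simp add: add_nonneg_pos)
  have "cmod (P_kernel \<beta> \<sigma> z \<omega>) + cmod (P_kernel_deriv \<beta> \<sigma> z \<omega>)
          \<le> (1 + 2 / (\<beta> + \<sigma>\<^sup>2)) * (1 / ((\<sigma>\<^sup>2 / 2)\<^sup>2 + (\<omega> - Im z)\<^sup>2))"
    using norm_P_kernel_add_deriv_le[OF assms(1-3)] by simp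
  also have "\<dots> \<le> (1 + 2 / (\<beta> + \<sigma>\<^sup>2)) * (2 * (1 + 1 / (\<sigma>\<^sup>2 / 2)\<^sup>2) * (1 + \<omega>\<^sup>2) / (Im z)\<^sup>2)"
    using assms \<open>0 < \<beta> + \<sigma>\<^sup>2\<close> by (intro mult_left_mono inverse_shifted_square_le) auto
  finally show ?thesis by simp
qed

theorem lemma5p3:
  fixes \<beta> \<sigma> :: real
  assumes "\<beta> > 0" and "\<sigma> > 0"
  shows "\<exists>C::real. \<forall>g::real measure. \<forall>z::complex.
           prob_space g \<longrightarrow> sets g = sets borel \<longrightarrow>
           0 \<le> Re z \<longrightarrow> Re z \<le> \<beta> \<longrightarrow> Im z \<noteq> 0 \<longrightarrow>
           ennreal (cmod (Pfun g \<beta> \<sigma> z) + cmod (deriv (Pfun g \<beta> \<sigma>) z))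
             \<le> (1 + (\<integral>\<^sup>+ \<omega>. ennreal (\<omega>\<^sup>2) \<partial>g)) * ennreal (C / \<bar>Im z\<bar>\<^sup>2)"
proof (intro exI allI impI)
  define C where "C = (1 + 2 / (\<beta> + \<sigma>\<^sup>2)) * (2 * (1 + 1 / (\<sigma>\<^sup>2 / 2)\<^sup>2))"
  fix g :: "real measure" and z :: complex
  assume g: "prob_space g" "sets g = sets borel"
    and z: "0 \<le> Re z" "Re z \<le> \<beta>" "Im z \<noteq> 0"
  have fin: "finite_measure g" using g(1) by (rule prob_space.finite_measure)
  have "0 < \<sigma>\<^sup>2 / 2" "0 \<le> C" using assms by (simp_all add: C_def add_nonneg_nonneg)
  have substrip: "\<sigma>\<^sup>2 / 2 - \<sigma>\<^sup>2 / 2 \<le> Re z" "Re z \<le> gam \<beta> \<sigma> - \<sigma>\<^sup>2 / 2"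
    using z by (simp_all add: gam_def)
  note integrable = integrable_P_kernel[OF fin g(2) \<open>0 < \<sigma>\<^sup>2 / 2\<close> substrip]
  have "- (\<sigma>\<^sup>2 / 2) < Re z" "Re z < gam \<beta> \<sigma>"
    using substrip \<open>0 < \<sigma>\<^sup>2 / 2\<close> by linarith+
  then have deriv_eq: "deriv (Pfun g \<beta> \<sigma>) z = (LINT \<omega>|g. P_kernel_deriv \<beta> \<sigma> z \<omega>)"
    by (intro DERIV_imp_deriv Pfun_has_field_derivative[OF fin g(2)])
  have "ennreal (cmod (Pfun g \<beta> \<sigma> z) + cmod (deriv (Pfun g \<beta> \<sigma>) z))
      \<le> (\<integral>\<^sup>+ \<omega>. ennreal (cmod (P_kernel \<beta> \<sigma> z \<omega>) + cmod (P_kernel_deriv \<beta> \<sigma> z \<omega>)) \<partial>g)"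
    unfolding deriv_eq Pfun_eq_integral_P_kernel by (rule ennreal_norm_integral_add_le[OF integrable])
  also have "\<dots> \<le> (1 + (\<integral>\<^sup>+ \<omega>. ennreal (\<omega>\<^sup>2) \<partial>g)) * ennreal (C / \<bar>Im z\<bar>\<^sup>2)"
    using norm_P_kernel_add_deriv_le_weighted[of \<sigma> z \<beta>] assms z
    by (intro nn_integral_le_second_moment[OF g]) (auto simp: C_def \<open>0 \<le> C\<close>)
  finally show "ennreal (cmod (Pfun g \<beta> \<sigma> z) + cmod (deriv (Pfun g \<beta> \<sigma>) z))
      \<le> (1 + (\<integral>\<^sup>+ \<omega>. ennreal (\<omega>\<^sup>2) \<partial>g)) * ennreal (C / \<bar>Im z\<bar>\<^sup>2)" .
qed

end
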